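(* Let $u\in L_{\mathrm{up}}$ and $(\ell_1,\ell_2)\in A_u$, and let $e\in E$ be the last edge of the path in $G$ from $r$ to $\mathrm{apex}(\ell_2)$. Then $e\in P_u$.
   Context: Let $(G=(V,E),L,w)$ be a WTAP instance (spanning tree $G$, links $L\subseteq\binom V2$, weights $w>0$) with a fixed root $r\in V$, and let $F\subseteq L$ be a WTAP solution, i.e. $\bigcup_{\ell\in F}P_\ell=E$, where $P_\ell$ is the edge set of the tree path between the endpoints of $\ell$ and $V_\ell$ its vertex set. Ancestors of $v$ are the vertices on the $r$-$v$ path in $G$ (including $r$ and $v$); descendants are defined reciprocally. $\mathrm{apex}(\ell)$ is the vertex of $V_\ell$ closest to $r$. An up-link is a link $\{t,b\}$ with $t$ an ancestor of $b$; $L_{\mathrm{up}}$ is the set of up-links. For $v\in V$ let $B_v=\{\ell\in F\colon\mathrm{apex}(\ell)\text{ is a descendant of }v\}$. For an up-link $u=\{t,b\}$ with $t$ an ancestor of $b$, let $v_u$ be the ancestor of $t$ farthest from $r$ such that $P_u\subseteq\bigcup_{\ell\in B_{v_u}}P_\ell$, and fix $F_u\subseteq B_{v_u}$ inclusion-wise minimal with $P_u\subseteq\bigcup_{\ell\in F_u}P_\ell$. For $\ell\in F_u$ let $P_{u,\ell}=P_u\setminus\bigcup_{\bar\ell\in F_u\setminus\{\ell\}}P_{\bar\ell}$; these sets are nonempty, pairwise disjoint, and each is the edge set of a path. Define $\ell_1\prec_u\ell_2$ iff the edges of $P_{u,\ell_1}$ appear before those of $P_{u,\ell_2}$ on the $t$-$b$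 path in $G$. If $\ell_1\prec_u\cdots\prec_u\ell_q$ are the links of $F_u$, let $A_u=\{(\ell_i,\ell_{i+1})\colon i=1,\dots,q-1\}$. *)

theory Defs
  imports Complex_Main
begin

text \<open>Graphs: vertices of type 'a, edges and links are 2-element sets of vertices.\<close>

definition is_tpath :: "'a set set \<Rightarrow> 'a list \<Rightarrow> 'a \<Rightarrow> 'a \<Rightarrow> bool" where
  "is_tpath E xs x y \<longleftrightarrow> xs \<noteq> [] \<and> hd xs = x \<and> last xs = y \<and> distinct xs \<and>
     (\<forall>i. Suc i < length xs \<longrightarrow> {xs ! i, xs ! Suc i} \<in> E)"

definition is_cycle :: "'a set set \<Rightarrow> 'a list \<Rightarrow> bool" where
  "is_cycle E xs \<longleftrightarrow> length xs \<ge> 3 \<and> distinct xs \<and>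
     (\<forall>i. Suc i < length xs \<longrightarrow> {xs ! i, xs ! Suc i} \<in> E) \<and> {last xs, hd xs} \<in> E"

definition spanning_tree :: "'a set \<Rightarrow> 'a set set \<Rightarrow> bool" where
  "spanning_tree V E \<longleftrightarrow> finite V \<and> E \<subseteq> {{x, y} | x y. x \<in> V \<and> y \<in> V \<and> x \<noteq> y} \<and>
     (\<forall>x\<in>V. \<forall>y\<in>V. \<exists>xs. is_tpath E xs x y) \<and> (\<nexists>xs. is_cycle E xs)"

definition tpath :: "'a set set \<Rightarrow> 'a \<Rightarrow> 'a \<Rightarrow> 'a list" where
  "tpath E x y = (THE xs. is_tpath E xs x y)"

definition list_edges :: "'a list \<Rightarrow> 'a set set" where
  "list_edges xs = {{xs ! i, xs ! Suc i} | i. Suc i < length xs}"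

definition Pl :: "'a set set \<Rightarrow> 'a set \<Rightarrow> 'a set set" where
  "Pl E l = \<Union>{list_edges (tpath E x y) | x y. l = {x, y}}"

definition Vl :: "'a set set \<Rightarrow> 'a set \<Rightarrow> 'a set" where
  "Vl E l = \<Union>{set (tpath E x y) | x y. l = {x, y}}"

definition ancestor :: "'a set set \<Rightarrow> 'a \<Rightarrow> 'a \<Rightarrow> 'a \<Rightarrow> bool" where
  "ancestor E r a v \<longleftrightarrow> a \<in> set (tpath E r v)"

definition depth :: "'a set set \<Rightarrow> 'a \<Rightarrow> 'a \<Rightarrow> nat" where
  "depth E r v = length (tpath E r v) - 1"

definition apex :: "'a set set \<Rightarrow> 'a \<Rightarrow> 'a set \<Rightarrow> 'a" where
  "apex E r l = (THE a. a \<in> Vl E l \<and> (\<forall>x\<in>Vl E l. depth E r a \<le> depth E r x))"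

definition Bv :: "'a set set \<Rightarrow> 'a \<Rightarrow> 'a set set \<Rightarrow> 'a \<Rightarrow> 'a set set" where
  "Bv E r F v = {l \<in> F. ancestor E r v (apex E r l)}"

definition is_vu :: "'a set set \<Rightarrow> 'a \<Rightarrow> 'a set set \<Rightarrow> 'a set \<Rightarrow> 'a \<Rightarrow> 'a \<Rightarrow> bool" where
  "is_vu E r F u t v \<longleftrightarrow> ancestor E r v t \<and> Pl E u \<subseteq> \<Union>(Pl E ` Bv E r F v) \<and>
     (\<forall>w. ancestor E r w t \<and> Pl E u \<subseteq> \<Union>(Pl E ` Bv E r F w) \<longrightarrow> depth E r w \<le> depth E r v)"

definition is_Fu :: "'a set set \<Rightarrow> 'a \<Rightarrow> 'a set set \<Rightarrow> 'a set \<Rightarrow> 'a \<Rightarrow> 'a set set \<Rightarrow> bool" where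
  "is_Fu E r F u v Fu \<longleftrightarrow> Fu \<subseteq> Bv E r F v \<and> Pl E u \<subseteq> \<Union>(Pl E ` Fu) \<and>
     (\<forall>H. H \<subset> Fu \<longrightarrow> \<not> Pl E u \<subseteq> \<Union>(Pl E ` H))"

definition Pul :: "'a set set \<Rightarrow> 'a set \<Rightarrow> 'a set set \<Rightarrow> 'a set \<Rightarrow> 'a set set" where
  "Pul E u Fu l = Pl E u - \<Union>(Pl E ` (Fu - {l}))"

definition prec_u :: "'a set set \<Rightarrow> 'a \<Rightarrow> 'a \<Rightarrow> 'a set set \<Rightarrow> 'a set \<Rightarrow> 'a set \<Rightarrow> bool" where
  "prec_u E t b Fu l1 l2 \<longleftrightarrow> (let xs = tpath E t b; u = {t, b} in
     \<forall>e1\<in>Pul E u Fu l1. \<forall>e2\<in>Pul E u Fu l2. \<exists>i j. i < j \<and> Suc j < length xs \<and>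
        e1 = {xs ! i, xs ! Suc i} \<and> e2 = {xs ! j, xs ! Suc j})"

definition in_Au :: "'a set set \<Rightarrow> 'a \<Rightarrow> 'a \<Rightarrow> 'a set set \<Rightarrow> 'a set \<Rightarrow> 'a set \<Rightarrow> bool" where
  "in_Au E t b Fu l1 l2 \<longleftrightarrow> l1 \<in> Fu \<and> l2 \<in> Fu \<and> prec_u E t b Fu l1 l2 \<and>
     \<not> (\<exists>l\<in>Fu. prec_u E t b Fu l1 l \<and> prec_u E t b Fu l l2)"

end

theory Submission
  imports Defs
begin

text \<open>
  Along the tree path of a link, the depth first strictly decreases down to the apex and then
  strictly increases: a path that goes down an edge cannot go up the next one without returning
  to the vertex it came from. Hence if an edge of \<open>P\<^sub>l\<close> has lower endpoint \<open>d\<close>, the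
  \<open>r\<close>-\<open>d\<close> path passes through \<open>apex(l)\<close> and from there runs along \<open>P\<^sub>l\<close>.
  For \<open>(l\<^sub>1, l\<^sub>2) \<in> A\<^sub>u\<close> there are edges \<open>e\<^sub>1 \<notin> P\<^sub>l\<^sub>2\<close> and \<open>e\<^sub>2 \<in> P\<^sub>l\<^sub>2\<close> on the
  \<open>t\<close>-\<open>b\<close> path with \<open>e\<^sub>1\<close> above \<open>e\<^sub>2\<close>. The \<open>r\<close>-\<open>b\<close> path thus reaches \<open>apex(l\<^sub>2)\<close>
  and then stays inside \<open>P\<^sub>l\<^sub>2\<close> down to \<open>e\<^sub>2\<close>; as it avoids \<open>e\<^sub>1\<close>, the apex lies
  strictly below \<open>e\<^sub>1\<close>, hence strictly below \<open>t\<close>, and its parent edge lies on \<open>P\<^sub>u\<close>.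
\<close>

lemma list_edges_nth: "Suc i < length xs \<Longrightarrow> {xs ! i, xs ! Suc i} \<in> list_edges xs"
  unfolding list_edges_def by blast

lemma list_edges_drop_nth:
  assumes "k \<le> i" "Suc i < length xs"
  shows "{xs ! i, xs ! Suc i} \<in> list_edges (drop k xs)"
  using list_edges_nth[of "i - k" "drop k xs"] assms by (simp add: Suc_diff_le)

lemma list_edges_take_subset: "list_edges (take n xs) \<subseteq> list_edges xs"
  unfolding list_edges_def by auto

lemma list_edges_drop_subset: "list_edges (drop n xs) \<subseteq> list_edges xs"
proof
  fix e assume "e \<in> list_edges (drop n xs)"
  then obtain i where "Suc i < length (drop n xs)" "e = {drop n xs ! i, drop n xs ! Suc i}"
    unfolding list_edges_def by auto
  then show "e \<in> list_edges xs" using list_edges_nth[of "n + i" xs] by auto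
qed

lemma list_edges_rev: "list_edges (rev xs) = list_edges xs"
proof -
  have "list_edges (rev xs) \<subseteq> list_edges xs" for xs :: "'a list"
  proof
    fix e assume "e \<in> list_edges (rev xs)"
    then obtain i where i: "Suc i < length xs" "e = {rev xs ! i, rev xs ! Suc i}"
      unfolding list_edges_def by auto
    then have "e = {xs ! (length xs - Suc (Suc i)), xs ! Suc (length xs - Suc (Suc i))}"
      by (auto simp: rev_nth Suc_diff_Suc)
    then show "e \<in> list_edges xs" using i(1) list_edges_nth[of "length xs - Suc (Suc i)" xs] by simp
  qed
  from this[of xs] this[of "rev xs"] show ?thesis by simp
qed

lemma list_edges_split:
  "list_edges xs \<subseteq> list_edges (take (Suc m) xs) \<union> list_edges (drop m xs)"
proof
  fix e assume "e \<in> list_edges xs"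
  then obtain i where i: "Suc i < length xs" "e = {xs ! i, xs ! Suc i}"
    unfolding list_edges_def by auto
  show "e \<in> list_edges (take (Suc m) xs) \<union> list_edges (drop m xs)"
  proof (cases "i < m")
    case True
    then show ?thesis using i list_edges_nth[of i "take (Suc m) xs"] by auto
  next
    case False
    then show ?thesis using i list_edges_drop_nth[of m i xs] by auto
  qed
qed

lemma distinct_adjacent_pair_eq:
  assumes "distinct xs" "Suc i < length xs" "Suc j < length xs"
    and "{xs ! i, xs ! Suc i} = {xs ! j, xs ! Suc j}"
  shows "i = j"
  using assms nth_eq_iff_index_eq[OF assms(1)] by (auto simp: doubleton_eq_iff)

lemma is_tpath_rev:
  assumes "is_tpath E xs x y" shows "is_tpath E (rev xs) y x"
  unfolding is_tpath_def
proof (intro conjI allI impI)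
  fix i assume i: "Suc i < length (rev xs)"
  let ?k = "length xs - Suc (Suc i)"
  have "{xs ! ?k, xs ! Suc ?k} \<in> E" using assms i unfolding is_tpath_def by auto
  then show "{rev xs ! i, rev xs ! Suc i} \<in> E"
    using i by (auto simp: rev_nth Suc_diff_Suc insert_commute)
qed (use assms in \<open>auto simp: is_tpath_def hd_rev last_rev\<close>)

lemma is_tpath_take:
  assumes "is_tpath E xs x y" "k < length xs"
  shows "is_tpath E (take (Suc k) xs) x (xs ! k)"
  unfolding is_tpath_def
proof (intro conjI allI impI)
  fix i assume "Suc i < length (take (Suc k) xs)"
  then show "{take (Suc k) xs ! i, take (Suc k) xs ! Suc i} \<in> E"
    using assms unfolding is_tpath_def by auto
next
  show "last (take (Suc k) xs) = xs ! k" using assms(2) by (simp add: take_Suc_conv_app_nth)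
qed (use assms in \<open>auto simp: is_tpath_def hd_take\<close>)

lemma is_tpath_drop:
  assumes "is_tpath E xs x y" "k < length xs"
  shows "is_tpath E (drop k xs) (xs ! k) y"
  using assms unfolding is_tpath_def
  by (auto simp: hd_drop_conv_nth last_drop)

lemma is_tpath_append:
  assumes xs: "is_tpath E xs x y" and ys: "is_tpath E ys y' z"
    and "{y, y'} \<in> E" "set xs \<inter> set ys = {}"
  shows "is_tpath E (xs @ ys) x z"
  unfolding is_tpath_def
proof (intro conjI allI impI)
  fix i assume i: "Suc i < length (xs @ ys)"
  consider "Suc i < length xs" | "Suc i = length xs" | "length xs \<le> i" by linarith
  then show "{(xs @ ys) ! i, (xs @ ys) ! Suc i} \<in> E"
  proof cases
    case 1
    then show ?thesis using xs by (auto simp: is_tpath_def nth_append)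
  next
    case 2
    then have "i = length xs - 1" by simp
    then have "(xs @ ys) ! i = y" "(xs @ ys) ! Suc i = y'"
      using xs ys by (auto simp: is_tpath_def nth_append last_conv_nth hd_conv_nth)
    then show ?thesis using assms(3) by simp
  next
    case 3
    then show ?thesis using ys i by (auto simp: is_tpath_def nth_append Suc_diff_le)
  qed
qed (use assms in \<open>auto simp: is_tpath_def\<close>)

lemma is_tpath_self: "is_tpath E xs x x \<Longrightarrow> xs = [x]"
  unfolding is_tpath_def by (cases xs) (auto split: if_splits)

lemma is_cycle_closed_tpath: "is_tpath E c x y \<Longrightarrow> {y, x} \<in> E \<Longrightarrow> 3 \<le> length c \<Longrightarrow> is_cycle E c"
  unfolding is_cycle_def is_tpath_def by auto

lemma is_tpath_detour_cycle:
  assumes xs: "is_tpath E xs x y" and ys: "is_tpath E ys x z"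
    and i: "0 < i" "i < length xs" and j: "0 < j" "j < length ys" and meet: "xs ! i = ys ! j"
    and fresh: "\<forall>j'. 0 < j' \<and> j' < j \<longrightarrow> ys ! j' \<notin> set xs" and "3 \<le> i + j"
  shows "is_cycle E (take i xs @ rev (take j (drop 1 ys)))"
proof (rule is_cycle_closed_tpath)
  have first: "is_tpath E (take i xs) x (xs ! (i - 1))"
    using is_tpath_take[OF xs, of "i - 1"] i by simp
  have second: "is_tpath E (rev (take j (drop 1 ys))) (ys ! j) (ys ! 1)"
    using is_tpath_rev[OF is_tpath_take[OF is_tpath_drop[OF ys, of 1], of "j - 1"]] j by simp
  have "{xs ! (i - 1), ys ! j} \<in> E"
    using xs i meet unfolding is_tpath_def by (metis Suc_pred')
  moreover have "ys ! Suc j' \<notin> set (take i xs)" if "j' < j" for j'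
  proof (cases "Suc j' = j")
    case True
    have "distinct (take i xs @ xs ! i # drop (Suc i) xs)"
      using xs id_take_nth_drop[OF i(2)] unfolding is_tpath_def by simp
    then show ?thesis using True meet by auto
  next
    case False
    then show ?thesis using fresh that by (auto dest: in_set_takeD)
  qed
  then have "set (take i xs) \<inter> set (rev (take j (drop 1 ys))) = {}"
    using j(2) by (auto simp: in_set_conv_nth)
  ultimately show "is_tpath E (take i xs @ rev (take j (drop 1 ys))) x (ys ! 1)"
    using is_tpath_append[OF first second] by simp
  show "{ys ! 1, x} \<in> E"
    using ys j unfolding is_tpath_def by (metis One_nat_def hd_conv_nth insert_commute
        length_greater_0_conv less_trans_Suc)
  show "3 \<le> length (take i xs @ rev (take j (drop 1 ys)))" using i j \<open>3 \<le> i + j\<close> by simp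
qed

lemma is_tpath_branch_cycle:
  assumes xs: "is_tpath E xs x y" and ys: "is_tpath E ys x y"
    and len: "1 < length xs" "1 < length ys" and branch: "xs ! 1 \<noteq> ys ! 1"
  shows "\<exists>c. is_cycle E c"
proof -
  have dys: "distinct ys" and xs0: "xs ! 0 = x" and ys0: "ys ! 0 = x"
    using xs ys len by (auto simp: is_tpath_def hd_conv_nth)
  \<comment> \<open>The cycle leaves \<open>x\<close> along \<open>xs\<close> and returns along \<open>ys\<close> from the first vertex
    \<open>ys ! j\<close> after \<open>x\<close> that lies on \<open>xs\<close>.\<close>
  define P where "P j \<longleftrightarrow> 0 < j \<and> j < length ys \<and> ys ! j \<in> set xs" for j
  define j where "j = (LEAST j. P j)"
  have "P (length ys - 1)"
    using xs ys len last_in_set[of xs] by (auto simp: P_def is_tpath_def last_conv_nth)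
  then have j: "0 < j" "j < length ys" "ys ! j \<in> set xs"
    using LeastI[of P] unfolding j_def P_def by blast+
  have fresh: "\<forall>j'. 0 < j' \<and> j' < j \<longrightarrow> ys ! j' \<notin> set xs"
    using not_less_Least[of _ P] j(2) unfolding j_def P_def by auto
  obtain i where i: "i < length xs" "xs ! i = ys ! j" using j(3) by (metis in_set_conv_nth)
  have "i \<noteq> 0"
  proof
    assume "i = 0"
    then have "ys ! j = ys ! 0" using i xs0 ys0 by simp
    moreover have "0 < length ys" using j(2) by linarith
    ultimately show False using nth_eq_iff_index_eq[OF dys j(2)] j(1) by fastforce
  qed
  moreover have "3 \<le> i + j" using branch i j \<open>i \<noteq> 0\<close> by (cases "i = 1"; cases "j = 1") auto
  ultimately show ?thesis using is_tpath_detour_cycle[OF xs ys _ i(1) j(1,2) i(2) fresh] by blast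
qed

lemma is_tpath_length_gt_1: "is_tpath E xs x y \<Longrightarrow> x \<noteq> y \<Longrightarrow> 1 < length xs"
  unfolding is_tpath_def by (cases xs) auto

lemma is_tpath_unique:
  assumes acyclic: "\<nexists>c. is_cycle E c"
  shows "is_tpath E xs x y \<Longrightarrow> is_tpath E ys x y \<Longrightarrow> xs = ys"
proof (induction xs arbitrary: x ys)
  case Nil
  then show ?case by (simp add: is_tpath_def)
next
  case (Cons a xs)
  show ?case
  proof (cases "x = y")
    case True
    then show ?thesis using Cons.prems is_tpath_self by metis
  next
    case False
    then have len: "1 < length (a # xs)" "1 < length ys"
      using Cons.prems is_tpath_length_gt_1 by metis+
    show ?thesis
    proof (cases "(a # xs) ! 1 = ys ! 1")
      case True
      then have "xs = drop 1 ys"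
        using Cons.IH is_tpath_drop[OF Cons.prems(1), of 1] is_tpath_drop[OF Cons.prems(2), of 1] len
        by simp
      moreover have "ys = a # drop 1 ys"
        using Cons.prems len unfolding is_tpath_def by (cases ys) auto
      ultimately show ?thesis by simp
    next
      case False
      then show ?thesis using is_tpath_branch_cycle[OF Cons.prems len] acyclic by blast
    qed
  qed
qed

lemma tpath_eqI:
  assumes "spanning_tree V E" "is_tpath E xs x y"
  shows "tpath E x y = xs"
  unfolding tpath_def
proof (rule the_equality)
  show "\<And>ys. is_tpath E ys x y \<Longrightarrow> ys = xs"
    using assms is_tpath_unique unfolding spanning_tree_def by metis
qed (fact assms(2))

lemma is_tpath_tpath:
  assumes "spanning_tree V E" "x \<in> V" "y \<in> V"
  shows "is_tpath E (tpath E x y) x y"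
proof -
  obtain xs where "is_tpath E xs x y" using assms unfolding spanning_tree_def by blast
  then show ?thesis using tpath_eqI[OF assms(1)] by metis
qed

lemma tpath_ends:
  assumes "spanning_tree V E" "x \<in> V" "y \<in> V"
  shows "tpath E x y \<noteq> []" "hd (tpath E x y) = x" "last (tpath E x y) = y" "distinct (tpath E x y)"
  using is_tpath_tpath[OF assms] unfolding is_tpath_def by auto

lemma tpath_swap:
  assumes "spanning_tree V E" "x \<in> V" "y \<in> V"
  shows "tpath E y x = rev (tpath E x y)"
  using tpath_eqI[OF assms(1) is_tpath_rev[OF is_tpath_tpath[OF assms]]] .

lemma spanning_tree_edge:
  assumes "spanning_tree V E" "{v, w} \<in> E"
  shows "v \<in> V" "w \<in> V" "v \<noteq> w"
  using assms unfolding spanning_tree_def by (auto simp: doubleton_eq_iff)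

lemma set_is_tpath_subset:
  assumes "spanning_tree V E" "is_tpath E xs x y" "x \<in> V"
  shows "set xs \<subseteq> V"
proof
  fix v assume "v \<in> set xs"
  then obtain i where i: "i < length xs" "v = xs ! i" by (metis in_set_conv_nth)
  show "v \<in> V"
  proof (cases i)
    case 0
    then show ?thesis using assms(2,3) i unfolding is_tpath_def by (auto simp: hd_conv_nth)
  next
    case (Suc k)
    then have "{xs ! k, v} \<in> E" using assms(2) i unfolding is_tpath_def by auto
    then show ?thesis using spanning_tree_edge[OF assms(1)] by blast
  qed
qed

lemma Pl_doubleton:
  assumes "spanning_tree V E" "x \<in> V" "y \<in> V"
  shows "Pl E {x, y} = list_edges (tpath E x y)"
  using tpath_swap[OF assms] unfolding Pl_def by (auto simp: doubleton_eq_iff list_edges_rev)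

lemma Vl_doubleton:
  assumes "spanning_tree V E" "x \<in> V" "y \<in> V"
  shows "Vl E {x, y} = set (tpath E x y)"
  using tpath_swap[OF assms] unfolding Vl_def by (auto simp: doubleton_eq_iff)

lemma length_tpath_root:
  assumes "spanning_tree V E" "r \<in> V" "v \<in> V"
  shows "length (tpath E r v) = Suc (depth E r v)"
  using tpath_ends[OF assms] unfolding depth_def by simp

lemma tpath_root_nth:
  assumes "spanning_tree V E" "r \<in> V" "v \<in> V" "i < length (tpath E r v)"
  shows "tpath E r (tpath E r v ! i) = take (Suc i) (tpath E r v)"
  using tpath_eqI[OF assms(1) is_tpath_take[OF is_tpath_tpath[OF assms(1-3)] assms(4)]] .

lemma tpath_ancestor:
  assumes tree: "spanning_tree V E" and "r \<in> V" "b \<in> V" "ancestor E r t b"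
  shows "tpath E t b = drop (depth E r t) (tpath E r b)"
proof -
  obtain k where k: "k < length (tpath E r b)" "tpath E r b ! k = t"
    using assms(4) unfolding ancestor_def by (metis in_set_conv_nth)
  have "depth E r t = k"
    using tpath_root_nth[OF assms(1-3) k(1)] k unfolding depth_def by simp
  then show ?thesis
    using tpath_eqI[OF tree is_tpath_drop[OF is_tpath_tpath[OF assms(1-3)] k(1)]] k(2) by simp
qed

lemma tpath_root_edge:
  assumes tree: "spanning_tree V E" and r: "r \<in> V" and vw: "{v, w} \<in> E"
  shows "tpath E r w = tpath E r v @ [w] \<or> tpath E r v = tpath E r w @ [v]"
proof -
  have v: "v \<in> V" and w: "w \<in> V" and "v \<noteq> w" using spanning_tree_edge[OF tree vw] by auto
  let ?P = "tpath E r v"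
  have P: "is_tpath E ?P r v" using is_tpath_tpath[OF tree r v] .
  show ?thesis
  proof (cases "w \<in> set ?P")
    case True
    then obtain k where k: "k < length ?P" "?P ! k = w" by (metis in_set_conv_nth)
    have down: "is_tpath E (drop k ?P) w v" using is_tpath_drop[OF P k(1)] k(2) by simp
    have "\<not> 3 \<le> length (drop k ?P)"
      using is_cycle_closed_tpath[OF down vw] tree unfolding spanning_tree_def by blast
    moreover have "1 < length (drop k ?P)" using is_tpath_length_gt_1[OF down] \<open>v \<noteq> w\<close> by simp
    ultimately have "length ?P = Suc (Suc k)" by simp
    then have "?P = take (Suc k) ?P @ [last ?P]"
      by (metis append_butlast_last_id butlast_conv_take diff_Suc_1 list.size(3) nat.distinct(1))
    then show ?thesis using tpath_root_nth[OF tree r v k(1)] k(2) P unfolding is_tpath_def by simp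
  next
    case False
    have "is_tpath E [w] w w" by (simp add: is_tpath_def)
    then have "is_tpath E (?P @ [w]) r w" using is_tpath_append[OF P _ vw] False by simp
    then show ?thesis using tpath_eqI[OF tree] by blast
  qed
qed

lemma tpath_root_keeps_descending:
  assumes tree: "spanning_tree V E" and r: "r \<in> V"
    and uv: "{u, v} \<in> E" and vw: "{v, w} \<in> E" and "u \<noteq> w"
    and down: "tpath E r v = tpath E r u @ [v]"
  shows "tpath E r w = tpath E r v @ [w]"
proof (rule ccontr)
  assume "tpath E r w \<noteq> tpath E r v @ [w]"
  then have "tpath E r v = tpath E r w @ [v]" using tpath_root_edge[OF tree r vw] by blast
  then have "last (tpath E r w) = last (tpath E r u)" using down by simp
  then show False
    using tpath_ends(3)[OF tree r] spanning_tree_edge[OF tree uv] spanning_tree_edge[OF tree vw]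
      \<open>u \<noteq> w\<close> by metis
qed

lemma tpath_root_descending:
  assumes tree: "spanning_tree V E" and r: "r \<in> V" and Y: "is_tpath E Y a z" and a: "a \<in> V"
    and lowest: "\<forall>v\<in>set Y. depth E r a \<le> depth E r v" and s: "s < length Y"
  shows "tpath E r (Y ! s) = tpath E r a @ take s (tl Y)"
proof -
  have YV: "set Y \<subseteq> V" using set_is_tpath_subset[OF tree Y a] .
  have dY: "distinct Y" and Y0: "Y ! 0 = a" and edge: "\<And>i. Suc i < length Y \<Longrightarrow> {Y ! i, Y ! Suc i} \<in> E"
    using Y unfolding is_tpath_def by (auto simp: hd_conv_nth)
  have step: "tpath E r (Y ! Suc i) = tpath E r (Y ! i) @ [Y ! Suc i]" if "Suc i < length Y" for i
    using that
  proof (induction i)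
    case 0
    have "Y ! 1 \<in> V" using YV 0 by auto
    moreover have "Y ! 1 \<in> set Y" using 0 by simp
    ultimately have "\<not> depth E r (Y ! 1) < depth E r a" using lowest by (meson not_le)
    then have "tpath E r a \<noteq> tpath E r (Y ! 1) @ [a]"
      using length_tpath_root[OF tree r a] length_tpath_root[OF tree r \<open>Y ! 1 \<in> V\<close>] by auto
    then show ?case using tpath_root_edge[OF tree r edge[OF 0]] Y0 by auto
  next
    case (Suc i)
    have "Y ! i \<noteq> Y ! Suc (Suc i)" using nth_eq_iff_index_eq[OF dY] Suc.prems by simp
    then show ?case
      using tpath_root_keeps_descending[OF tree r edge edge] Suc by simp
  qed
  show ?thesis
    using s
  proof (induction s)
    case (Suc s)
    then show ?case using step[of s] by (simp add: take_Suc_conv_app_nth nth_tl)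
  qed (simp add: Y0)
qed

lemma depth_tpath_root_descending:
  assumes tree: "spanning_tree V E" and r: "r \<in> V" and Y: "is_tpath E Y a z" and a: "a \<in> V"
    and lowest: "\<forall>v\<in>set Y. depth E r a \<le> depth E r v" and s: "s < length Y"
  shows "depth E r (Y ! s) = depth E r a + s"
  using tpath_root_descending[OF assms] s length_tpath_root[OF tree r a] unfolding depth_def by simp

lemma tpath_lowest_vertex_unique:
  assumes tree: "spanning_tree V E" and r: "r \<in> V" and X: "is_tpath E X x y" and x: "x \<in> V"
    and a: "a \<in> set X" "\<forall>v\<in>set X. depth E r a \<le> depth E r v"
    and a': "a' \<in> set X" "\<forall>v\<in>set X. depth E r a' \<le> depth E r v"
  shows "a' = a"
proof -
  have ordered: "X ! m' = X ! m"
    if m: "m \<le> m'" "m' < length X" and lowest: "\<forall>v\<in>set X. depth E r (X ! m) \<le> depth E r v"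
      and "depth E r (X ! m') \<le> depth E r (X ! m)" for m m'
  proof -
    have D: "is_tpath E (drop m X) (X ! m) y" using is_tpath_drop[OF X] m by simp
    have "depth E r (drop m X ! (m' - m)) = depth E r (X ! m) + (m' - m)"
    proof (rule depth_tpath_root_descending[OF tree r D])
      show "X ! m \<in> V" using set_is_tpath_subset[OF tree X x] m by auto
      show "\<forall>v\<in>set (drop m X). depth E r (X ! m) \<le> depth E r v"
        using lowest set_drop_subset[of m X] by blast
      show "m' - m < length (drop m X)" using m by simp
    qed
    moreover have "drop m X ! (m' - m) = X ! m'" using m by simp
    ultimately have "depth E r (X ! m') = depth E r (X ! m) + (m' - m)" by simp
    then have "m' = m" using that by arith
    then show ?thesis by simp
  qed
  obtain m m' where "m < length X" "X ! m = a" "m' < length X" "X ! m' = a'"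
    using a(1) a'(1) by (metis in_set_conv_nth)
  then show ?thesis
    using ordered[of m m'] ordered[of m' m] a(2) a'(2) by (cases "m \<le> m'") auto
qed

lemma apex_doubleton:
  assumes tree: "spanning_tree V E" and r: "r \<in> V" and x: "x \<in> V" and y: "y \<in> V"
  shows "apex E r {x, y} \<in> set (tpath E x y)"
    and "\<forall>v\<in>set (tpath E x y). depth E r (apex E r {x, y}) \<le> depth E r v"
proof -
  let ?X = "tpath E x y"
  have X: "is_tpath E ?X x y" using is_tpath_tpath[OF tree x y] .
  obtain a where a: "a \<in> set ?X" "\<forall>v\<in>set ?X. depth E r a \<le> depth E r v"
    using ex_has_least_nat[of "\<lambda>v. v \<in> set ?X" x "depth E r"] X unfolding is_tpath_def
    by (metis hd_in_set)
  have "apex E r {x, y} = a"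
    unfolding apex_def Vl_doubleton[OF tree x y]
  proof (rule the_equality)
    show "a \<in> set ?X \<and> (\<forall>v\<in>set ?X. depth E r a \<le> depth E r v)" using a by blast
  next
    fix a' assume "a' \<in> set ?X \<and> (\<forall>v\<in>set ?X. depth E r a' \<le> depth E r v)"
    then show "a' = a" using tpath_lowest_vertex_unique[OF tree r X x a] by blast
  qed
  then show "apex E r {x, y} \<in> set ?X" "\<forall>v\<in>set ?X. depth E r (apex E r {x, y}) \<le> depth E r v"
    using a by auto
qed

lemma descending_path_edge:
  assumes tree: "spanning_tree V E" and r: "r \<in> V" and Y: "is_tpath E Y a z" and a: "a \<in> V"
    and lowest: "\<forall>v\<in>set Y. depth E r a \<le> depth E r v"
    and cd: "{c, d} \<in> list_edges Y" and child: "tpath E r d = tpath E r c @ [d]"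
  shows "\<exists>zs. tpath E r d = tpath E r a @ zs \<and> list_edges (a # zs) \<subseteq> list_edges Y"
proof -
  obtain s where s: "Suc s < length Y" "{c, d} = {Y ! s, Y ! Suc s}"
    using cd unfolding list_edges_def by auto
  have down: "tpath E r (Y ! i) = tpath E r a @ take i (tl Y)" if "i \<le> Suc s" for i
    using tpath_root_descending[OF tree r Y a lowest] that s(1) by simp
  have "d = Y ! Suc s"
  proof (rule ccontr)
    assume "d \<noteq> Y ! Suc s"
    then have "c = Y ! Suc s" "d = Y ! s" using s(2) by (auto simp: doubleton_eq_iff)
    moreover have "length (tpath E r d) = Suc (length (tpath E r c))" using child by simp
    ultimately show False using down[of s] down[of "Suc s"] s(1) by simp
  qed
  moreover have "a # take (Suc s) (tl Y) = take (Suc (Suc s)) Y"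
    using Y unfolding is_tpath_def by (cases Y) auto
  ultimately show ?thesis
    using down[of "Suc s"] list_edges_take_subset[of "Suc (Suc s)" Y]
    by (intro exI[of _ "take (Suc s) (tl Y)"]) auto
qed

lemma tpath_root_through_apex:
  assumes tree: "spanning_tree V E" and r: "r \<in> V" and x: "x \<in> V" and y: "y \<in> V"
    and cd: "{c, d} \<in> Pl E {x, y}" and child: "tpath E r d = tpath E r c @ [d]"
  shows "\<exists>zs. tpath E r d = tpath E r (apex E r {x, y}) @ zs
    \<and> list_edges (apex E r {x, y} # zs) \<subseteq> Pl E {x, y}"
proof -
  let ?X = "tpath E x y" and ?a = "apex E r {x, y}"
  have X: "is_tpath E ?X x y" using is_tpath_tpath[OF tree x y] .
  have XV: "set ?X \<subseteq> V" using set_is_tpath_subset[OF tree X x] .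
  obtain m where m: "m < length ?X" "?X ! m = ?a"
    using apex_doubleton(1)[OF tree r x y] by (metis in_set_conv_nth)
  have aV: "?a \<in> V" using apex_doubleton(1)[OF tree r x y] XV by blast
  \<comment> \<open>The apex splits the link's path into two paths descending from it.\<close>
  define Y1 where "Y1 = rev (take (Suc m) ?X)"
  define Y2 where "Y2 = drop m ?X"
  have Y1: "is_tpath E Y1 ?a x" using is_tpath_rev[OF is_tpath_take[OF X m(1)]] m(2) by (simp add: Y1_def)
  have Y2: "is_tpath E Y2 ?a y" using is_tpath_drop[OF X m(1)] m(2) by (simp add: Y2_def)
  have sets: "set Y1 \<subseteq> set ?X" "set Y2 \<subseteq> set ?X"
    unfolding Y1_def Y2_def by (auto dest: in_set_takeD in_set_dropD)
  have edges: "list_edges Y1 \<subseteq> Pl E {x, y}" "list_edges Y2 \<subseteq> Pl E {x, y}"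
    unfolding Y1_def Y2_def Pl_doubleton[OF tree x y] list_edges_rev
    using list_edges_take_subset[of "Suc m" ?X] list_edges_drop_subset[of m ?X] by auto
  have "{c, d} \<in> list_edges Y1 \<union> list_edges Y2"
    using cd list_edges_split[of ?X m] unfolding Y1_def Y2_def Pl_doubleton[OF tree x y] list_edges_rev
    by blast
  moreover have "\<forall>v\<in>set Y. depth E r ?a \<le> depth E r v" if "set Y \<subseteq> set ?X" for Y
    using apex_doubleton(2)[OF tree r x y] that by blast
  ultimately show ?thesis
    using descending_path_edge[OF tree r Y1 aV _ _ child] descending_path_edge[OF tree r Y2 aV _ _ child]
      sets edges by blast
qed

lemma link_apex_below_uncovered_edge:
  assumes tree: "spanning_tree V E" and r: "r \<in> V" and x: "x \<in> V" and y: "y \<in> V"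
    and b: "b \<in> V" and J: "Suc J < length (tpath E r b)" and "i < J"
    and covered: "{tpath E r b ! J, tpath E r b ! Suc J} \<in> Pl E {x, y}"
    and uncovered: "{tpath E r b ! i, tpath E r b ! Suc i} \<notin> Pl E {x, y}"
  defines "a \<equiv> apex E r {x, y}"
  shows "i < depth E r a" and "tpath E r a = take (Suc (depth E r a)) (tpath E r b)"
proof -
  let ?P = "tpath E r b"
  let ?Q = "take (Suc (Suc J)) ?P"
  have "tpath E r (?P ! Suc J) = ?Q" using tpath_root_nth[OF tree r b J] .
  moreover have "tpath E r (?P ! J) = take (Suc J) ?P" using tpath_root_nth[OF tree r b] J by simp
  ultimately have "tpath E r (?P ! Suc J) = tpath E r (?P ! J) @ [?P ! Suc J]"
    using J by (simp add: take_Suc_conv_app_nth)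
  then obtain zs where zs: "?Q = tpath E r a @ zs" "list_edges (a # zs) \<subseteq> Pl E {x, y}"
    using tpath_root_through_apex[OF tree r x y covered] \<open>tpath E r (?P ! Suc J) = ?Q\<close>
    unfolding a_def by metis
  have aV: "a \<in> V"
    using apex_doubleton(1)[OF tree r x y] set_is_tpath_subset[OF tree is_tpath_tpath[OF tree x y] x]
    unfolding a_def by blast
  have len_a: "length (tpath E r a) = Suc (depth E r a)" using length_tpath_root[OF tree r aV] .
  have "Suc (depth E r a) \<le> Suc (Suc J)" using arg_cong[OF zs(1), of length] len_a J by simp
  then show "tpath E r a = take (Suc (depth E r a)) ?P"
    using arg_cong[OF zs(1), of "take (Suc (depth E r a))"] len_a by (simp add: min_def)
  have "tpath E r a = butlast (tpath E r a) @ [a]"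
    using tpath_ends[OF tree r aV] by (metis append_butlast_last_id)
  moreover have "length (butlast (tpath E r a)) = depth E r a" using len_a by simp
  ultimately have "drop (depth E r a) (tpath E r a) = [a]" by (metis append_eq_conv_conj)
  then have "drop (depth E r a) ?Q = a # zs" using zs(1) len_a by simp
  show "i < depth E r a"
  proof (rule ccontr)
    assume "\<not> i < depth E r a"
    then have "{?Q ! i, ?Q ! Suc i} \<in> list_edges (drop (depth E r a) ?Q)"
      using list_edges_drop_nth[of "depth E r a" i ?Q] J \<open>i < J\<close> by simp
    then show False
      using zs(2) \<open>drop (depth E r a) ?Q = a # zs\<close> uncovered J \<open>i < J\<close> by auto
  qed
qed

lemma Pul_nonempty:
  assumes "is_Fu E r F u v Fu" "l \<in> Fu"
  shows "Pul E u Fu l \<noteq> {}"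
proof
  assume "Pul E u Fu l = {}"
  then have "Pl E u \<subseteq> \<Union>(Pl E ` (Fu - {l}))" unfolding Pul_def by blast
  moreover have "Fu - {l} \<subset> Fu" using assms(2) by blast
  ultimately show False using assms(1) unfolding is_Fu_def by blast
qed

lemma Pul_subset_Pl:
  assumes cover: "Pl E u \<subseteq> \<Union>(Pl E ` Fu)"
  shows "Pul E u Fu l \<subseteq> Pl E l"
proof
  fix e assume e: "e \<in> Pul E u Fu l"
  then have "e \<in> Pl E u" "e \<notin> \<Union>(Pl E ` (Fu - {l}))" unfolding Pul_def by auto
  then obtain l' where "l' \<in> Fu" "e \<in> Pl E l'" using cover by blast
  then show "e \<in> Pl E l" using \<open>e \<notin> \<Union>(Pl E ` (Fu - {l}))\<close> by blast
qed

lemma prec_u_irrefl: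
  assumes "distinct (tpath E t b)" "Pul E {t, b} Fu l \<noteq> {}"
  shows "\<not> prec_u E t b Fu l l"
proof
  assume "prec_u E t b Fu l l"
  then have order: "\<forall>e1\<in>Pul E {t, b} Fu l. \<forall>e2\<in>Pul E {t, b} Fu l. \<exists>i j. i < j \<and>
      Suc j < length (tpath E t b) \<and> e1 = {tpath E t b ! i, tpath E t b ! Suc i} \<and>
      e2 = {tpath E t b ! j, tpath E t b ! Suc j}"
    unfolding prec_u_def Let_def .
  obtain e where "e \<in> Pul E {t, b} Fu l" using assms(2) by blast
  then obtain i j where "i < j" "Suc j < length (tpath E t b)"
    "e = {tpath E t b ! i, tpath E t b ! Suc i}" "e = {tpath E t b ! j, tpath E t b ! Suc j}"
    using bspec[OF bspec[OF order]] by blast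
  then show False using distinct_adjacent_pair_eq[OF assms(1), of i j] by simp
qed

lemma in_Au_separating_edges:
  assumes distinct: "distinct (tpath E t b)" and Fu: "is_Fu E r F {t, b} v Fu"
    and A: "in_Au E t b Fu l1 l2"
  obtains i j where "i < j" "Suc j < length (tpath E t b)"
    "{tpath E t b ! i, tpath E t b ! Suc i} \<notin> Pl E l2"
    "{tpath E t b ! j, tpath E t b ! Suc j} \<in> Pl E l2"
proof -
  let ?xs = "tpath E t b" and ?u = "{t, b}"
  have l12: "l1 \<in> Fu" "l2 \<in> Fu" "prec_u E t b Fu l1 l2" using A unfolding in_Au_def by auto
  obtain e1 e2 where e1: "e1 \<in> Pul E ?u Fu l1" and e2: "e2 \<in> Pul E ?u Fu l2"
    using Pul_nonempty[OF Fu] l12 by blast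
  have order: "\<forall>e1\<in>Pul E ?u Fu l1. \<forall>e2\<in>Pul E ?u Fu l2. \<exists>i j. i < j \<and> Suc j < length ?xs \<and>
      e1 = {?xs ! i, ?xs ! Suc i} \<and> e2 = {?xs ! j, ?xs ! Suc j}"
    using l12(3) unfolding prec_u_def Let_def by simp
  obtain i j where ij: "i < j" "Suc j < length ?xs"
    "e1 = {?xs ! i, ?xs ! Suc i}" "e2 = {?xs ! j, ?xs ! Suc j}"
    using bspec[OF bspec[OF order e1] e2] by blast
  have "l1 \<noteq> l2"
    using prec_u_irrefl[OF distinct Pul_nonempty[OF Fu l12(1)]] l12(3) by blast
  then have "e1 \<notin> Pl E l2" using e1 l12(2) unfolding Pul_def by blast
  moreover have "Pl E ?u \<subseteq> \<Union>(Pl E ` Fu)" using Fu unfolding is_Fu_def by blast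
  then have "e2 \<in> Pl E l2" using e2 Pul_subset_Pl by blast
  ultimately show thesis using that[OF ij(1,2)] ij(3,4) by simp
qed

theorem lemma9:
  fixes V :: "'a set" and E L F :: "'a set set" and w :: "'a set \<Rightarrow> real" and r :: 'a
    and u :: "'a set" and t b v :: 'a and Fu :: "'a set set" and l1 l2 :: "'a set"
    and e :: "'a set"
  assumes tree: "spanning_tree V E"
    and links: "L \<subseteq> {{x, y} | x y. x \<in> V \<and> y \<in> V \<and> x \<noteq> y}"
    and weights: "\<forall>l\<in>L. w l > 0"
    and root: "r \<in> V"
    and sol: "F \<subseteq> L" "\<Union>(Pl E ` F) = E"
    and up: "u \<in> L" "u = {t, b}" "ancestor E r t b"
    and vu: "is_vu E r F u t v"
    and Fu: "is_Fu E r F u v Fu"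
    and A: "in_Au E t b Fu l1 l2"
    and last_edge: "length (tpath E r (apex E r l2)) \<ge> 2"
      "e = {tpath E r (apex E r l2) ! (length (tpath E r (apex E r l2)) - 2),
            last (tpath E r (apex E r l2))}"
  shows "e \<in> Pl E u"
proof -
  have tV: "t \<in> V" and bV: "b \<in> V" using up(1,2) links by (auto simp: doubleton_eq_iff)
  have "l2 \<in> Fu" using A unfolding in_Au_def by blast
  then have "l2 \<in> L" using Fu sol(1) unfolding is_Fu_def Bv_def by blast
  then obtain x y where l2: "l2 = {x, y}" "x \<in> V" "y \<in> V" using links by blast
  obtain i j where ij: "i < j" "Suc j < length (tpath E t b)"
    "{tpath E t b ! i, tpath E t b ! Suc i} \<notin> Pl E l2"
    "{tpath E t b ! j, tpath E t b ! Suc j} \<in> Pl E l2"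
    by (rule in_Au_separating_edges[OF tpath_ends(4)[OF tree tV bV] Fu[unfolded up(2)] A])
  define k where "k = depth E r t"
  define a where "a = apex E r l2"
  define D where "D = depth E r a"
  let ?P = "tpath E r b"
  have tb: "tpath E t b = drop k ?P" using tpath_ancestor[OF tree root bV up(3)] k_def by simp
  have J: "Suc (k + j) < length ?P" using ij(2) tb by simp
  have "k + i < D" and pa: "tpath E r a = take (Suc D) ?P"
    using link_apex_below_uncovered_edge[OF tree root l2(2,3) bV J, of "k + i"] ij tb J
    unfolding a_def D_def l2(1) by simp_all
  have len_a: "length (tpath E r a) = Suc D" using last_edge(1) unfolding a_def D_def depth_def by simp
  then have D: "Suc D \<le> length ?P" "0 < D"
    using arg_cong[OF pa, of length] last_edge(1) unfolding a_def by auto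
  have "tpath E r a \<noteq> []" using len_a by auto
  then have "e = {tpath E r a ! (D - 1), tpath E r a ! D}"
    using last_edge(2) len_a unfolding a_def by (simp add: last_conv_nth numeral_2_eq_2)
  also have "\<dots> = {?P ! (D - 1), ?P ! Suc (D - 1)}" unfolding pa using D by simp
  also have "\<dots> \<in> list_edges (tpath E t b)"
    unfolding tb using list_edges_drop_nth[of k "D - 1" ?P] \<open>k + i < D\<close> D by simp
  finally show ?thesis unfolding up(2) Pl_doubleton[OF tree tV bV] .
qed

end
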